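(* Let $I_1,I_2>0$ with $I_1\neq I_2$, $\alpha_i=1+I_i$, $\beta_i=1-I_i$, and $M>0$. Consider the system on $\mathbb{R}^2$ $$\dot\theta_1=\alpha_1+\beta_1\cos\theta_1+(1-\cos\theta_1)u,\qquad \dot\theta_2=\alpha_2+\beta_2\cos\theta_2+(1-\cos\theta_2)u,$$ with measurable controls satisfying $|u(t)|\le M$, and the time-optimal control problem of steering $(\theta_1,\theta_2)(0)=(0,0)$ to $(\theta_1,\theta_2)(T)=(2m_1\pi,2m_2\pi)$, $m_1,m_2$ positive integers, in minimum time $T$. Then for any extremal of this problem given by Pontryagin's maximum principle (Hamiltonian $H=\lambda_0+\langle\lambda, f+Zu\rangle$ with $f=(\alpha_1+\beta_1\cos\theta_1,\alpha_2+\beta_2\cos\theta_2)'$, $Z=(1-\cos\theta_1,1-\cos\theta_2)'$), the switching function $\phi(t)=\langle\lambda(t),Z(\Theta(t))\rangle$ does not vanish identically on any time interval of positive length. Consequently a minimum-time control is bang-bang: $u(t)=M$ when $\phi(t)<0$ and $u(t)=-M$ when $\phi(t)>0$, so that $u(t)\in\{-M,M\}$ for almost every $t$.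
   Context: Here $\lambda(t)\in\mathbb{R}^2$ is the costate of the maximum principle (nonzero, satisfying the adjoint equation $\dot\lambda=-\partial H/\partial\Theta$), and the optimal control minimizes the Hamiltonian pointwise over $|u|\le M$. *)

theory Defs
  imports "HOL-Analysis.Analysis"
begin

definition alpha :: "real \<Rightarrow> real" where "alpha I = 1 + I"
definition beta :: "real \<Rightarrow> real" where "beta I = 1 - I"

definition fcomp :: "real \<Rightarrow> real \<Rightarrow> real" where
  "fcomp I th = alpha I + beta I * cos th"
definition Zcomp :: "real \<Rightarrow> real" where
  "Zcomp th = 1 - cos th"

definition Ham :: "real \<Rightarrow> real \<Rightarrow> real \<Rightarrow> real \<Rightarrow> real \<Rightarrow> real \<Rightarrow> real \<Rightarrow> real \<Rightarrow> real" where
  "Ham I1 I2 l0 l1 l2 th1 th2 v =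
     l0 + l1 * (fcomp I1 th1 + Zcomp th1 * v) + l2 * (fcomp I2 th2 + Zcomp th2 * v)"

definition switching :: "(real \<Rightarrow> real) \<Rightarrow> (real \<Rightarrow> real) \<Rightarrow> (real \<Rightarrow> real) \<Rightarrow> (real \<Rightarrow> real) \<Rightarrow> real \<Rightarrow> real" where
  "switching l1 l2 th1 th2 t = l1 t * Zcomp (th1 t) + l2 t * Zcomp (th2 t)"

definition admissible ::
  "real \<Rightarrow> real \<Rightarrow> real \<Rightarrow> nat \<Rightarrow> nat \<Rightarrow> real \<Rightarrow> (real \<Rightarrow> real) \<Rightarrow> (real \<Rightarrow> real) \<Rightarrow> (real \<Rightarrow> real) \<Rightarrow> bool" where
  "admissible I1 I2 M m1 m2 T th1 th2 u \<longleftrightarrow>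
     0 < T \<and>
     u \<in> borel_measurable (lebesgue_on {0..T}) \<and>
     (\<forall>t\<in>{0..T}. \<bar>u t\<bar> \<le> M) \<and>
     th1 0 = 0 \<and> th2 0 = 0 \<and>
     th1 T = 2 * real m1 * pi \<and> th2 T = 2 * real m2 * pi \<and>
     (\<forall>t\<in>{0..T}.
        ((\<lambda>s. fcomp I1 (th1 s) + Zcomp (th1 s) * u s) has_integral (th1 t - th1 0)) {0..t} \<and>
        ((\<lambda>s. fcomp I2 (th2 s) + Zcomp (th2 s) * u s) has_integral (th2 t - th2 0)) {0..t})"

text \<open>Extremal of the PMP for the time-optimal problem: nonzero costate satisfying
  the adjoint equation dlambda_i/dt = - dH/dtheta_i = lambda_i sin theta_i (beta_i - u)
  (in integral form), lambda0 >= 0, u minimizes H pointwise a.e. over |v| <= M, and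
  H vanishes a.e. (free final time).\<close>
definition pmp_extremal ::
  "real \<Rightarrow> real \<Rightarrow> real \<Rightarrow> nat \<Rightarrow> nat \<Rightarrow> real \<Rightarrow> (real \<Rightarrow> real) \<Rightarrow> (real \<Rightarrow> real) \<Rightarrow> (real \<Rightarrow> real)
   \<Rightarrow> real \<Rightarrow> (real \<Rightarrow> real) \<Rightarrow> (real \<Rightarrow> real) \<Rightarrow> bool" where
  "pmp_extremal I1 I2 M m1 m2 T th1 th2 u l0 l1 l2 \<longleftrightarrow>
     admissible I1 I2 M m1 m2 T th1 th2 u \<and>
     0 \<le> l0 \<and>
     (\<forall>t\<in>{0..T}. (l1 t, l2 t) \<noteq> (0, 0)) \<and>
     (\<forall>t\<in>{0..T}.
        ((\<lambda>s. l1 s * sin (th1 s) * (beta I1 - u s)) has_integral (l1 t - l1 0)) {0..t} \<and>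
        ((\<lambda>s. l2 s * sin (th2 s) * (beta I2 - u s)) has_integral (l2 t - l2 0)) {0..t}) \<and>
     (AE t in lebesgue_on {0..T}.
        (\<forall>v. \<bar>v\<bar> \<le> M \<longrightarrow>
           Ham I1 I2 l0 (l1 t) (l2 t) (th1 t) (th2 t) (u t) \<le> Ham I1 I2 l0 (l1 t) (l2 t) (th1 t) (th2 t) v)) \<and>
     (AE t in lebesgue_on {0..T}. Ham I1 I2 l0 (l1 t) (l2 t) (th1 t) (th2 t) (u t) = 0)"

end

theory Submission
  imports Defs
begin

(* The states th_i and costates l_i are only absolutely continuous, but the key
   observation is that phi is differentiable everywhere, with
   phi' = 2 (l1 sin th1 + l2 sin th2): the control terms cancel.  At a zero of phi
   that is a limit of other zeros, phi' = 0 as well; since (l1, l2) <> 0 this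
   forces th1, th2 or th1 - th2 to be a multiple of 2 pi.  At such times the
   corresponding angle has nonzero derivative (2, 2 and (I1 - I2)(1 - cos th1)),
   so these times are isolated, hence countable.  Thus the zero set of phi is
   countable: it contains no interval, is a null set, and minimising the
   Hamiltonian, which is affine in u with slope phi, gives u = -M sgn phi a.e. *)

text \<open>Every discrete set in a second countable space is countable: distinct points are
  separated by distinct elements of a countable basis.\<close>

lemma discrete_imp_countable:
  fixes S :: "'a::second_countable_topology set"
  assumes "discrete S"
  shows "countable S"
proof -
  obtain \<B> :: "'a set set" where \<B>: "countable \<B>" "topological_basis \<B>"
    using ex_countable_basis by blast
  have "\<exists>B\<in>\<B>. B \<inter> S = {x}" if x: "x \<in> S" for x
  proof -
    obtain U where "open U" "U \<inter> S = {x}"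
      using discreteD[OF assms x] by (auto elim: isolated_inE)
    moreover obtain B where "B \<in> \<B>" "x \<in> B" "B \<subseteq> U"
      using topological_basisE[OF \<B>(2) \<open>open U\<close>] \<open>U \<inter> S = {x}\<close> by blast
    ultimately show ?thesis by blast
  qed
  then obtain b where b: "\<And>x. x \<in> S \<Longrightarrow> b x \<in> \<B> \<and> b x \<inter> S = {x}" by metis
  have "inj_on b S"
    by (rule inj_onI) (metis b singleton_inject)
  moreover have "countable (b ` S)"
    using b \<B>(1) by (meson countable_subset image_subsetI)
  ultimately show ?thesis by (metis countable_image_inj_on)
qed

lemma isolated_points_countable:
  fixes E :: "'a::second_countable_topology set"
  shows "countable {x. x isolated_in E}"
proof (rule discrete_imp_countable, rule discreteI)
  fix x assume "x \<in> {x. x isolated_in E}"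
  then obtain U where "open U" "U \<inter> E = {x}" "x \<in> E"
    by (auto elim: isolated_inE simp: isolated_in_def)
  then show "x isolated_in {x. x isolated_in E}"
    by (intro isolated_inI[where T=U]) (auto simp: isolated_in_def)
qed

lemma derivative_zero_at_level_set_limit:
  fixes g :: "real \<Rightarrow> real"
  assumes g: "(g has_real_derivative p) (at x within S)" and x: "x \<in> S"
    and lim: "x islimpt {y\<in>S. g y = g x}"
  shows "p = 0"
proof -
  let ?Z = "{y\<in>S. g y = g x}"
  have "(g has_real_derivative p) (at x within ?Z)"
    by (rule has_field_derivative_subset[OF g]) auto
  moreover have "(g has_real_derivative 0) (at x within ?Z)"
    by (rule has_field_derivative_transform_within[OF DERIV_const zero_less_one]) (use x in auto)
  moreover have "at x within ?Z \<noteq> bot"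
    using lim trivial_limit_within by blast
  ultimately show ?thesis by (rule has_field_derivative_unique)
qed

text \<open>An angle g with nonzero derivative passes through a full turn (a multiple of 2 pi) at
  an isolated time: nearby full turns would have to be the same multiple, i.e. lie in
  the level set of g through x.\<close>

lemma full_turn_isolated:
  fixes g :: "real \<Rightarrow> real"
  assumes g: "(g has_real_derivative p) (at x within S)" and p: "p \<noteq> 0"
    and x: "x \<in> S" and gx: "cos (g x) = 1"
  shows "x isolated_in {t\<in>S. cos (g t) = 1}"
proof -
  have "\<not> x islimpt {y\<in>S. g y = g x}"
    using derivative_zero_at_level_set_limit[OF g x] p by blast
  then obtain U where U: "open U" "x \<in> U" "\<forall>y\<in>U. y \<in> S \<and> g y = g x \<longrightarrow> y = x"
    unfolding islimpt_def by blast
  obtain d where d: "d > 0" "\<forall>y\<in>S. dist y x < d \<longrightarrow> dist (g y) (g x) < 2 * pi"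
    using DERIV_continuous[OF g] unfolding continuous_within_eps_delta
    by (meson pi_gt_zero mult_pos_pos zero_less_numeral)
  obtain k0 :: int where k0: "g x = k0 * 2 * pi" using gx cos_one_2pi_int by auto
  have "y = x" if y: "y \<in> U \<inter> ball x d" "y \<in> S" "cos (g y) = 1" for y
  proof -
    obtain k :: int where k: "g y = k * 2 * pi" using y(3) cos_one_2pi_int by auto
    have "\<bar>(k - k0) * (2 * pi)\<bar> < 2 * pi"
      using d(2) y k k0 by (auto simp: dist_real_def dist_commute algebra_simps)
    then have "\<bar>real_of_int (k - k0)\<bar> < 1" by (simp add: abs_mult)
    then have "g y = g x" using k k0 by simp
    then show ?thesis using U y by blast
  qed
  then show ?thesis
    by (intro isolated_inI[where T="U \<inter> ball x d"]) (use U d x gx in auto)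
qed

lemma full_turn_set_countable:
  fixes g :: "real \<Rightarrow> real"
  assumes A: "A \<subseteq> {t\<in>S. cos (g t) = 1}"
    and deriv: "\<And>x. x \<in> A \<Longrightarrow> \<exists>p. p \<noteq> 0 \<and> (g has_real_derivative p) (at x within S)"
  shows "countable A"
proof (rule discrete_imp_countable, rule discreteI)
  fix x assume x: "x \<in> A"
  then obtain p where "p \<noteq> 0" "(g has_real_derivative p) (at x within S)" using deriv by blast
  then have "x isolated_in {t\<in>S. cos (g t) = 1}" using full_turn_isolated x A by blast
  then show "x isolated_in A" using isolated_in_subset A x by blast
qed

definition primitive_on :: "(real \<Rightarrow> real) \<Rightarrow> (real \<Rightarrow> real) \<Rightarrow> real \<Rightarrow> bool" where
  "primitive_on P g T \<longleftrightarrow> (\<forall>t\<in>{0..T}. (g has_integral (P t - P 0)) {0..t})"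

lemma primitive_on_subinterval:
  assumes P: "primitive_on P g T" and ab: "0 \<le> a" "a \<le> b" "b \<le> T"
  shows "(g has_integral (P b - P a)) {a..b}"
proof -
  have gb: "(g has_integral (P b - P 0)) {0..b}" and ga: "(g has_integral (P a - P 0)) {0..a}"
    using P ab by (auto simp: primitive_on_def)
  have iab: "g integrable_on {a..b}"
    by (rule integrable_subinterval_real[OF has_integral_integrable[OF gb]]) (use ab in auto)
  have "integral {0..a} g + integral {a..b} g = integral {0..b} g"
    by (rule Henstock_Kurzweil_Integration.integral_combine)
       (use ab has_integral_integrable[OF gb] in auto)
  then have "integral {a..b} g = P b - P a"
    using ga gb by (simp add: integral_unique)
  with iab show ?thesis by (metis has_integral_integral)
qed

lemma primitive_on_continuous:
  assumes P: "primitive_on P g T"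
  shows "continuous_on {0..T} P"
proof (cases "0 \<le> T")
  case True
  then have "g integrable_on {0..T}" using P by (auto simp: primitive_on_def)
  then have "continuous_on {0..T} (\<lambda>t. P 0 + integral {0..t} g)"
    by (intro continuous_intros indefinite_integral_continuous_1)
  moreover have "\<forall>t\<in>{0..T}. P 0 + integral {0..t} g = P t"
    using P by (auto simp: primitive_on_def integral_unique)
  ultimately show ?thesis using continuous_on_eq by blast
qed simp

definition control_integral :: "(real \<Rightarrow> real) \<Rightarrow> real \<Rightarrow> real" where
  "control_integral u t = integral {0..t} u"

lemma primitive_on_control_integral:
  assumes "u integrable_on {0..T}"
  shows "primitive_on (control_integral u) u T"
  unfolding primitive_on_def control_integral_def
  using integrable_subinterval_real[OF assms] by (auto intro: integrable_integral)

lemma bounded_integrand_estimate: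
  fixes g :: "real \<Rightarrow> real"
  assumes "(g has_integral I) {a..b}" "a \<le> b" "\<forall>s\<in>{a..b}. \<bar>g s\<bar> \<le> B"
  shows "\<bar>I\<bar> \<le> B * (b - a)"
proof -
  have "\<bar>g a\<bar> \<le> B" using assms(2,3) by auto
  then have "0 \<le> B" by linarith
  then show ?thesis
    using has_integral_bound_real[OF _ _ assms(1), where S="{}"] assms by force
qed

lemma control_integral_lipschitz:
  assumes u: "u integrable_on {0..T}" and ub: "\<forall>s\<in>{0..T}. \<bar>u s\<bar> \<le> M"
    and x: "x \<in> {0..T}" and t: "t \<in> {0..T}"
  shows "\<bar>control_integral u t - control_integral u x\<bar> \<le> M * \<bar>t - x\<bar>"
proof -
  have "\<bar>control_integral u b - control_integral u a\<bar> \<le> M * (b - a)"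
    if "0 \<le> a" "a \<le> b" "b \<le> T" for a b
    by (rule bounded_integrand_estimate[OF
          primitive_on_subinterval[OF primitive_on_control_integral[OF u]]])
       (use that ub in auto)
  from this[of x t] this[of t x] show ?thesis
    using x t by (cases "x \<le> t") (auto simp: abs_minus_commute)
qed

lemma primitive_linearization_one_sided:
  fixes p q u P :: "real \<Rightarrow> real"
  assumes P: "primitive_on P (\<lambda>s. p s + q s * u s) T"
    and u: "u integrable_on {0..T}" and ub: "\<forall>s\<in>{0..T}. \<bar>u s\<bar> \<le> M"
    and ab: "0 \<le> a" "a \<le> b" "b \<le> T"
    and close: "\<forall>s\<in>{a..b}. \<bar>p s - p x\<bar> \<le> e \<and> \<bar>q s - q x\<bar> \<le> e"
  shows "\<bar>P b - P a - p x * (b - a) - q x * (control_integral u b - control_integral u a)\<bar>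
           \<le> e * (1 + M) * (b - a)"
proof -
  have "((\<lambda>s. p s + q s * u s) has_integral (P b - P a)) {a..b}"
    by (rule primitive_on_subinterval[OF P ab])
  moreover have "((\<lambda>s. p x + q x * u s) has_integral
      (p x * (b - a) + q x * (control_integral u b - control_integral u a))) {a..b}"
    using has_integral_add[OF has_integral_const_real[of "p x" a b] has_integral_mult_right[OF
        primitive_on_subinterval[OF primitive_on_control_integral[OF u] ab], of "q x"]] ab
    by (simp add: mult.commute)
  ultimately have "((\<lambda>s. (p s - p x) + (q s - q x) * u s) has_integral
      (P b - P a - p x * (b - a) - q x * (control_integral u b - control_integral u a))) {a..b}"
    by (auto dest: has_integral_diff simp: algebra_simps)
  moreover have "\<bar>(p s - p x) + (q s - q x) * u s\<bar> \<le> e * (1 + M)" if s: "s \<in> {a..b}" for s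
  proof -
    have "\<bar>(q s - q x) * u s\<bar> \<le> e * M"
      unfolding abs_mult by (rule mult_mono) (use close ub ab s in auto)
    moreover have "\<bar>p s - p x\<bar> \<le> e" using close s by auto
    ultimately have "\<bar>(p s - p x) + (q s - q x) * u s\<bar> \<le> e + e * M"
      using abs_triangle_ineq[of "p s - p x" "(q s - q x) * u s"] by linarith
    then show ?thesis by (simp add: algebra_simps)
  qed
  ultimately show ?thesis using bounded_integrand_estimate ab(2) by blast
qed

lemma primitive_linearization:
  fixes p q u P :: "real \<Rightarrow> real"
  assumes P: "primitive_on P (\<lambda>s. p s + q s * u s) T"
    and u: "u integrable_on {0..T}" and ub: "\<forall>s\<in>{0..T}. \<bar>u s\<bar> \<le> M"
    and x: "x \<in> {0..T}" and t: "t \<in> {0..T}"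
    and close: "\<forall>s\<in>{min x t..max x t}. \<bar>p s - p x\<bar> \<le> e \<and> \<bar>q s - q x\<bar> \<le> e"
  shows "\<bar>P t - P x - p x * (t - x) - q x * (control_integral u t - control_integral u x)\<bar>
           \<le> e * (1 + M) * \<bar>t - x\<bar>"
proof (cases "x \<le> t")
  case True
  then show ?thesis
    using primitive_linearization_one_sided[OF P u ub, where a=x and b=t and x=x and e=e] x t close
    by auto
next
  case False
  then show ?thesis
    using primitive_linearization_one_sided[OF P u ub, where a=t and b=x and x=x and e=e] x t close
    by (auto simp: abs_minus_commute algebra_simps)
qed

text \<open>The graph of the cumulative control, and differentiability along it: P has graph
  derivative (p, q) at x if P(t) - P(x) = p (t - x) + q (W t - W x) + o(|t - x|), written
  as a Frechet derivative of P o fst on the graph.  Formally P' = p + q u, and the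
  library's chain rules for has_derivative give sum and product rules for free.\<close>

definition control_graph :: "(real \<Rightarrow> real) \<Rightarrow> real \<Rightarrow> (real \<times> real) set" where
  "control_graph u T = (\<lambda>t. (t, control_integral u t)) ` {0..T}"

definition has_graph_derivative ::
  "(real \<Rightarrow> real) \<Rightarrow> real \<Rightarrow> (real \<Rightarrow> real) \<Rightarrow> real \<Rightarrow> real \<Rightarrow> real \<Rightarrow> bool" where
  "has_graph_derivative u T P p q x \<longleftrightarrow>
     ((\<lambda>z. P (fst z)) has_derivative (\<lambda>z. p * fst z + q * snd z))
       (at (x, control_integral u x) within control_graph u T)"

lemma continuous_on_common_closeness:
  fixes p q :: "real \<Rightarrow> real"
  assumes cp: "continuous_on {0..T} p" and cq: "continuous_on {0..T} q"
    and x: "x \<in> {0..T}" and e: "0 < e"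
  obtains d where "0 < d"
    and "\<And>s. s \<in> {0..T} \<Longrightarrow> \<bar>s - x\<bar> < d \<Longrightarrow> \<bar>p s - p x\<bar> \<le> e \<and> \<bar>q s - q x\<bar> \<le> e"
proof -
  obtain d1 where d1: "d1 > 0" "\<forall>s\<in>{0..T}. dist s x < d1 \<longrightarrow> dist (p s) (p x) < e"
    using cp x e unfolding continuous_on_iff by blast
  obtain d2 where d2: "d2 > 0" "\<forall>s\<in>{0..T}. dist s x < d2 \<longrightarrow> dist (q s) (q x) < e"
    using cq x e unfolding continuous_on_iff by blast
  show ?thesis
    by (rule that[of "min d1 d2"]) (use d1 d2 in \<open>auto simp: dist_real_def\<close>)
qed

lemma primitive_graph_derivative:
  fixes p q u P :: "real \<Rightarrow> real"
  assumes P: "primitive_on P (\<lambda>s. p s + q s * u s) T"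
    and u: "u integrable_on {0..T}" and ub: "\<forall>s\<in>{0..T}. \<bar>u s\<bar> \<le> M"
    and cp: "continuous_on {0..T} p" and cq: "continuous_on {0..T} q"
    and x: "x \<in> {0..T}"
  shows "has_graph_derivative u T P (p x) (q x) x"
  unfolding has_graph_derivative_def has_derivative_within_alt
proof (intro conjI allI impI)
  show "bounded_linear (\<lambda>z::real \<times> real. p x * fst z + q x * snd z)"
    by (intro bounded_linear_intros)
  fix e :: real assume e: "0 < e"
  have M: "0 \<le> M" using ub x by force
  define e' where "e' = e / (1 + M)"
  have e': "0 < e'" "e' * (1 + M) = e" using e M by (auto simp: e'_def)
  obtain d where d: "0 < d"
    and close: "\<And>s. s \<in> {0..T} \<Longrightarrow> \<bar>s - x\<bar> < d \<Longrightarrow>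
                       \<bar>p s - p x\<bar> \<le> e' \<and> \<bar>q s - q x\<bar> \<le> e'"
    using continuous_on_common_closeness[OF cp cq x e'(1)] by blast
  show "\<exists>d>0. \<forall>y\<in>control_graph u T. norm (y - (x, control_integral u x)) < d \<longrightarrow>
      norm (P (fst y) - P (fst (x, control_integral u x)) -
            (p x * fst (y - (x, control_integral u x)) + q x * snd (y - (x, control_integral u x))))
      \<le> e * norm (y - (x, control_integral u x))"
  proof (intro exI[of _ d] conjI ballI impI d)
    fix y assume "y \<in> control_graph u T" and yd: "norm (y - (x, control_integral u x)) < d"
    then obtain t where t: "t \<in> {0..T}" and y: "y = (t, control_integral u t)"
      by (auto simp: control_graph_def)
    have tx: "\<bar>t - x\<bar> \<le> norm (y - (x, control_integral u x))"
      using norm_fst_le[of "t - x" "control_integral u t - control_integral u x"] by (simp add: y)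
    have "\<forall>s\<in>{min x t..max x t}. \<bar>p s - p x\<bar> \<le> e' \<and> \<bar>q s - q x\<bar> \<le> e'"
      using x t tx yd by (intro ballI close) auto
    from primitive_linearization[OF P u ub x t this]
    have "\<bar>P t - P x - p x * (t - x) - q x * (control_integral u t - control_integral u x)\<bar>
               \<le> e * \<bar>t - x\<bar>"
      unfolding e'(2) .
    also have "\<dots> \<le> e * norm (y - (x, control_integral u x))"
      using tx e by simp
    finally show "norm (P (fst y) - P (fst (x, control_integral u x)) -
            (p x * fst (y - (x, control_integral u x)) + q x * snd (y - (x, control_integral u x))))
      \<le> e * norm (y - (x, control_integral u x))"
      by (simp add: y algebra_simps)
  qed
qed

text \<open>If the dW-coefficient vanishes, a graph derivative is an ordinary derivative, because
  W is Lipschitz and so |(t, W t) - (x, W x)| is comparable to |t - x|.\<close>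

lemma graph_derivative_imp_real_derivative:
  fixes g u :: "real \<Rightarrow> real"
  assumes g: "has_graph_derivative u T g p 0 x"
    and u: "u integrable_on {0..T}" and ub: "\<forall>s\<in>{0..T}. \<bar>u s\<bar> \<le> M"
    and x: "x \<in> {0..T}"
  shows "(g has_real_derivative p) (at x within {0..T})"
  unfolding has_field_derivative_def has_derivative_within_alt
proof (intro conjI allI impI)
  show "bounded_linear ((*) p)" by (rule bounded_linear_mult_right)
  fix e :: real assume e: "0 < e"
  have M: "0 \<le> M" using ub x by force
  then obtain d where d: "d > 0" and est: "\<forall>y\<in>control_graph u T.
      norm (y - (x, control_integral u x)) < d \<longrightarrow>
      norm (g (fst y) - g x - p * fst (y - (x, control_integral u x)))
        \<le> e / (1 + M) * norm (y - (x, control_integral u x))"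
    using g e unfolding has_graph_derivative_def has_derivative_within_alt
    by (auto dest!: spec[of _ "e / (1 + M)"])
  show "\<exists>d>0. \<forall>t\<in>{0..T}. norm (t - x) < d \<longrightarrow> norm (g t - g x - p * (t - x)) \<le> e * norm (t - x)"
  proof (intro exI[of _ "d / (1 + M)"] conjI ballI impI)
    show "0 < d / (1 + M)" using d M by simp
    fix t assume t: "t \<in> {0..T}" and td: "norm (t - x) < d / (1 + M)"
    let ?n = "norm ((t, control_integral u t) - (x, control_integral u x))"
    have "?n \<le> \<bar>t - x\<bar> + M * \<bar>t - x\<bar>"
      using norm_Pair_le[of "t - x" "control_integral u t - control_integral u x"]
        control_integral_lipschitz[OF u ub x t] by simp
    then have n: "?n \<le> (1 + M) * \<bar>t - x\<bar>" by (simp add: algebra_simps)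
    moreover have "(1 + M) * \<bar>t - x\<bar> < d" using td M by (simp add: field_simps)
    moreover have "(t, control_integral u t) \<in> control_graph u T"
      using t by (auto simp: control_graph_def)
    ultimately have "\<bar>g t - g x - p * (t - x)\<bar> \<le> e / (1 + M) * ?n"
      using est by auto
    also have "\<dots> \<le> e / (1 + M) * ((1 + M) * \<bar>t - x\<bar>)"
      by (rule mult_left_mono[OF n]) (use e M in auto)
    finally show "norm (g t - g x - p * (t - x)) \<le> e * norm (t - x)"
      using M by simp
  qed
qed

lemma has_graph_derivative_add:
  assumes "has_graph_derivative u T f p q x" and "has_graph_derivative u T g p' q' x"
  shows "has_graph_derivative u T (\<lambda>t. f t + g t) (p + p') (q + q') x"
  using has_derivative_add[OF assms[unfolded has_graph_derivative_def]]
  unfolding has_graph_derivative_def by (simp add: algebra_simps)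

lemma has_graph_derivative_diff:
  assumes "has_graph_derivative u T f p q x" and "has_graph_derivative u T g p' q' x"
  shows "has_graph_derivative u T (\<lambda>t. f t - g t) (p - p') (q - q') x"
  using has_derivative_diff[OF assms[unfolded has_graph_derivative_def]]
  unfolding has_graph_derivative_def by (simp add: algebra_simps)

text \<open>If a nonzero vector (l1, l2) is orthogonal to both (1 - cos a, 1 - cos b) and
  (sin a, sin b), the determinant 4 sin(a/2) sin(b/2) sin((a - b)/2) vanishes, so a, b
  or a - b is a full turn.\<close>

lemma critical_switching_angles:
  fixes a b l1 l2 :: real
  assumes e1: "l1 * (1 - cos a) + l2 * (1 - cos b) = 0" and e2: "l1 * sin a + l2 * sin b = 0"
    and nz: "(l1, l2) \<noteq> (0, 0)"
  shows "cos a = 1 \<or> cos b = 1 \<or> cos (a - b) = 1"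
proof -
  define det where "det = (1 - cos a) * sin b - (1 - cos b) * sin a"
  have "l1 * det = sin b * (l1 * (1 - cos a) + l2 * (1 - cos b))
                   - (1 - cos b) * (l1 * sin a + l2 * sin b)"
   and "l2 * det = (1 - cos a) * (l1 * sin a + l2 * sin b)
                   - sin a * (l1 * (1 - cos a) + l2 * (1 - cos b))"
    by (simp_all add: det_def algebra_simps)
  then have "det = 0" using e1 e2 nz by auto
  moreover have "det = 4 * sin (a / 2) * sin (b / 2) * sin ((a - b) / 2)"
  proof -
    have "det = (1 - cos (2 * (a / 2))) * sin (2 * (b / 2))
                - (1 - cos (2 * (b / 2))) * sin (2 * (a / 2))"
      by (simp add: det_def)
    also have "\<dots> = 4 * sin (a / 2) * sin (b / 2) * sin (a / 2 - b / 2)"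
      unfolding cos_double_sin sin_double sin_diff by (simp add: algebra_simps power2_eq_square)
    finally show ?thesis by (simp add: diff_divide_distrib)
  qed
  moreover have "cos c = 1" if "sin (c / 2) = 0" for c :: real
    using cos_double_sin[of "c / 2"] that by simp
  ultimately show ?thesis by auto
qed

lemma hamiltonian_difference:
  "Ham I1 I2 l0 a b c d v - Ham I1 I2 l0 a b c d w = (a * Zcomp c + b * Zcomp d) * (v - w)"
  by (simp add: Ham_def algebra_simps)

lemma linear_minimizer_bang_bang:
  fixes s w M :: real
  assumes w: "\<bar>w\<bar> \<le> M" and min: "\<forall>v. \<bar>v\<bar> \<le> M \<longrightarrow> s * w \<le> s * v" and s: "s \<noteq> 0"
  shows "(s < 0 \<longrightarrow> w = M) \<and> (s > 0 \<longrightarrow> w = - M) \<and> w \<in> {- M, M}"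
proof -
  have "0 \<le> M" using w by linarith
  then have "s * w \<le> s * M" "s * w \<le> s * (- M)"
    using min[rule_format, of M] min[rule_format, of "- M"] by auto
  then have "(s < 0 \<longrightarrow> M \<le> w) \<and> (s > 0 \<longrightarrow> w \<le> - M)"
    using mult_le_cancel_left_neg[of s w M] mult_le_cancel_left_pos[of s w "- M"] by blast
  then show ?thesis using w s by (auto simp: neq_iff)
qed

lemma state_graph_derivative:
  fixes th u :: "real \<Rightarrow> real"
  assumes state: "primitive_on th (\<lambda>s. fcomp I (th s) + Zcomp (th s) * u s) T"
    and u: "u integrable_on {0..T}" and ub: "\<forall>s\<in>{0..T}. \<bar>u s\<bar> \<le> M"
    and x: "x \<in> {0..T}"
  shows "has_graph_derivative u T th (fcomp I (th x)) (Zcomp (th x)) x"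
  by (rule primitive_graph_derivative[OF state u ub _ _ x])
     (unfold fcomp_def Zcomp_def; intro continuous_intros primitive_on_continuous[OF state])+

text \<open>Graph derivative of one summand l Z(th) of the switching function; the control terms
  cancel, and since alpha + beta = 2 the drift terms collapse to 2 l sin th.\<close>

lemma switching_component_graph_derivative:
  fixes th l u :: "real \<Rightarrow> real"
  assumes state: "primitive_on th (\<lambda>s. fcomp I (th s) + Zcomp (th s) * u s) T"
    and costate: "primitive_on l (\<lambda>s. l s * sin (th s) * (beta I - u s)) T"
    and u: "u integrable_on {0..T}" and ub: "\<forall>s\<in>{0..T}. \<bar>u s\<bar> \<le> M"
    and x: "x \<in> {0..T}"
  shows "has_graph_derivative u T (\<lambda>t. l t * Zcomp (th t)) (2 * l x * sin (th x)) 0 x"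
proof -
  have cth: "continuous_on {0..T} th" by (rule primitive_on_continuous[OF state])
  have cl: "continuous_on {0..T} l" by (rule primitive_on_continuous[OF costate])
  note dth = state_graph_derivative[OF state u ub x]
  have "(\<lambda>s. l s * sin (th s) * (beta I - u s)) =
        (\<lambda>s. l s * sin (th s) * beta I + (- (l s * sin (th s))) * u s)"
    by (auto simp: algebra_simps)
  then have "primitive_on l (\<lambda>s. l s * sin (th s) * beta I + (- (l s * sin (th s))) * u s) T"
    using costate by simp
  then have dl: "has_graph_derivative u T l (l x * sin (th x) * beta I) (- (l x * sin (th x))) x"
    by (rule primitive_graph_derivative[OF _ u ub _ _ x]) (intro continuous_intros cth cl)+
  show "has_graph_derivative u T (\<lambda>t. l t * Zcomp (th t)) (2 * l x * sin (th x)) 0 x"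
    using dth dl unfolding has_graph_derivative_def Zcomp_def
    by (auto intro!: derivative_eq_intros
        simp: fun_eq_iff fcomp_def alpha_def beta_def algebra_simps)
qed

text \<open>At a full turn Z(th) = 0 and f(th) = alpha + beta = 2, so the state moves with speed 2.\<close>

lemma state_derivative_at_full_turn:
  fixes th u :: "real \<Rightarrow> real"
  assumes state: "primitive_on th (\<lambda>s. fcomp I (th s) + Zcomp (th s) * u s) T"
    and u: "u integrable_on {0..T}" and ub: "\<forall>s\<in>{0..T}. \<bar>u s\<bar> \<le> M"
    and x: "x \<in> {0..T}" and turn: "cos (th x) = 1"
  shows "(th has_real_derivative 2) (at x within {0..T})"
proof (rule graph_derivative_imp_real_derivative[OF _ u ub x])
  show "has_graph_derivative u T th 2 0 x"
    using state_graph_derivative[OF state u ub x] turn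
    by (simp add: fcomp_def Zcomp_def alpha_def beta_def)
qed

locale extremal_arc =
  fixes I1 I2 M :: real and m1 m2 :: nat and T :: real
    and th1 th2 u :: "real \<Rightarrow> real" and l0 :: real and l1 l2 :: "real \<Rightarrow> real"
  assumes extremal: "pmp_extremal I1 I2 M m1 m2 T th1 th2 u l0 l1 l2"
    and distinct_currents: "I1 \<noteq> I2"
begin

lemma control_bound: "\<forall>s\<in>{0..T}. \<bar>u s\<bar> \<le> M"
  and control_measurable: "u \<in> borel_measurable (lebesgue_on {0..T})"
  and state1: "primitive_on th1 (\<lambda>s. fcomp I1 (th1 s) + Zcomp (th1 s) * u s) T"
  and state2: "primitive_on th2 (\<lambda>s. fcomp I2 (th2 s) + Zcomp (th2 s) * u s) T"
  and costate1: "primitive_on l1 (\<lambda>s. l1 s * sin (th1 s) * (beta I1 - u s)) T"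
  and costate2: "primitive_on l2 (\<lambda>s. l2 s * sin (th2 s) * (beta I2 - u s)) T"
  and costate_nonzero: "\<forall>t\<in>{0..T}. (l1 t, l2 t) \<noteq> (0, 0)"
  and hamiltonian_minimized: "AE t in lebesgue_on {0..T}. \<forall>v. \<bar>v\<bar> \<le> M \<longrightarrow>
      Ham I1 I2 l0 (l1 t) (l2 t) (th1 t) (th2 t) (u t) \<le> Ham I1 I2 l0 (l1 t) (l2 t) (th1 t) (th2 t) v"
  using extremal unfolding pmp_extremal_def admissible_def primitive_on_def by auto

lemma control_integrable: "u integrable_on {0..T}"
  using measurable_bounded_by_integrable_imp_absolutely_integrable[OF control_measurable,
      of "\<lambda>_. M"] control_bound
  by (auto simp: absolutely_integrable_on_def)

text \<open>Although the states and costates are merely Lipschitz, the switching function is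
  differentiable everywhere: the control terms cancel, leaving
  phi' = 2 (l1 sin th1 + l2 sin th2).\<close>

lemma switching_derivative:
  assumes x: "x \<in> {0..T}"
  shows "(switching l1 l2 th1 th2 has_real_derivative 2 * (l1 x * sin (th1 x) + l2 x * sin (th2 x)))
           (at x within {0..T})"
proof (rule graph_derivative_imp_real_derivative[OF _ control_integrable control_bound x])
  show "has_graph_derivative u T (switching l1 l2 th1 th2)
          (2 * (l1 x * sin (th1 x) + l2 x * sin (th2 x))) 0 x"
    using has_graph_derivative_add[OF
        switching_component_graph_derivative[OF state1 costate1 control_integrable control_bound x]
        switching_component_graph_derivative[OF state2 costate2 control_integrable control_bound x]]
    by (simp add: switching_def[abs_def] algebra_simps)
qed

text \<open>When the two angles agree modulo 2 pi, their difference is differentiable with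
  derivative (I1 - I2)(1 - cos th1); this vanishes only at full turns of th1.\<close>

lemma phase_difference_derivative:
  assumes x: "x \<in> {0..T}" and turn: "cos (th1 x - th2 x) = 1"
  shows "((\<lambda>t. th1 t - th2 t) has_real_derivative (I1 - I2) * (1 - cos (th1 x)))
           (at x within {0..T})"
proof (rule graph_derivative_imp_real_derivative[OF _ control_integrable control_bound x])
  have "sin (th1 x - th2 x) = 0" using sin_cos_squared_add[of "th1 x - th2 x"] turn by simp
  then have "cos (th1 x) = cos (th2 x)"
    using cos_add[of "th1 x - th2 x" "th2 x"] turn by simp
  then show "has_graph_derivative u T (\<lambda>t. th1 t - th2 t) ((I1 - I2) * (1 - cos (th1 x))) 0 x"
    using has_graph_derivative_diff[OF
        state_graph_derivative[OF state1 control_integrable control_bound x]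
        state_graph_derivative[OF state2 control_integrable control_bound x]]
    by (simp add: fcomp_def Zcomp_def alpha_def beta_def algebra_simps)
qed

text \<open>A zero of phi that is not isolated in the zero set has phi' = 0 there,
  so by critical_switching_angles it is a full turn of th1, of th2, or of th1 - th2;
  each of these sets is countable, as is the set of isolated zeros.\<close>

lemma switching_zero_set_countable: "countable {t\<in>{0..T}. switching l1 l2 th1 th2 t = 0}"
  (is "countable ?Z")
proof -
  let ?turns = "\<lambda>g. {t\<in>{0..T}. cos (g t) = 1}"
  let ?phase = "{t\<in>{0..T}. cos (th1 t - th2 t) = 1 \<and> cos (th1 t) \<noteq> 1}"
  have "?Z \<subseteq> {x. x isolated_in ?Z} \<union> ?turns th1 \<union> ?turns th2 \<union> ?phase"
  proof
    fix x assume x: "x \<in> ?Z"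
    show "x \<in> {x. x isolated_in ?Z} \<union> ?turns th1 \<union> ?turns th2 \<union> ?phase"
    proof (cases "x isolated_in ?Z")
      case False
      then have "x islimpt {y\<in>{0..T}. switching l1 l2 th1 th2 y = switching l1 l2 th1 th2 x}"
        using x by (simp add: isolated_in_islimpt_iff)
      from derivative_zero_at_level_set_limit[OF switching_derivative _ this] x
      have "l1 x * sin (th1 x) + l2 x * sin (th2 x) = 0" by simp
      moreover have "l1 x * (1 - cos (th1 x)) + l2 x * (1 - cos (th2 x)) = 0"
        using x by (simp add: switching_def Zcomp_def)
      ultimately have "cos (th1 x) = 1 \<or> cos (th2 x) = 1 \<or> cos (th1 x - th2 x) = 1"
        using critical_switching_angles costate_nonzero x by blast
      then show ?thesis using x by auto
    qed simp
  qed
  moreover have "countable {x. x isolated_in ?Z}" by (rule isolated_points_countable)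
  moreover have "countable (?turns th1)"
    by (rule full_turn_set_countable[OF order_refl], rule exI[of _ 2])
       (use state_derivative_at_full_turn[OF state1 control_integrable control_bound] in auto)
  moreover have "countable (?turns th2)"
    by (rule full_turn_set_countable[OF order_refl], rule exI[of _ 2])
       (use state_derivative_at_full_turn[OF state2 control_integrable control_bound] in auto)
  moreover have "countable ?phase"
  proof (rule full_turn_set_countable[where g="\<lambda>t. th1 t - th2 t"])
    fix x assume x: "x \<in> ?phase"
    then have "(I1 - I2) * (1 - cos (th1 x)) \<noteq> 0" using distinct_currents by simp
    then show "\<exists>p. p \<noteq> 0 \<and> ((\<lambda>t. th1 t - th2 t) has_real_derivative p) (at x within {0..T})"
      using phase_difference_derivative x by blast
  qed blast
  ultimately show ?thesis by (meson countable_Un countable_subset)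
qed

text \<open>Since H is affine in the control with slope phi and phi vanishes only on a null
  set, pointwise minimisation of H forces the bang-bang law almost everywhere.\<close>

lemma bang_bang:
  "AE t in lebesgue_on {0..T}.
     (switching l1 l2 th1 th2 t < 0 \<longrightarrow> u t = M) \<and>
     (switching l1 l2 th1 th2 t > 0 \<longrightarrow> u t = - M) \<and>
     u t \<in> {- M, M}"
proof -
  let ?Z = "{t\<in>{0..T}. switching l1 l2 th1 th2 t = 0}"
  have "?Z \<in> null_sets lebesgue"
    using countable_imp_null_set_lborel[OF switching_zero_set_countable]
    by (rule null_sets_completionI)
  then have "AE t in lebesgue_on {0..T}. t \<notin> ?Z"
    by (intro AE_not_in) (auto simp: null_sets_restrict_space)
  moreover have "AE t in lebesgue_on {0..T}. t \<in> {0..T}"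
    by (simp add: AE_restrict_space_iff)
  ultimately show ?thesis using hamiltonian_minimized
  proof eventually_elim
    case (elim t)
    let ?s = "switching l1 l2 th1 th2 t"
    have "?s * u t \<le> ?s * v" if "\<bar>v\<bar> \<le> M" for v
    proof -
      have "Ham I1 I2 l0 (l1 t) (l2 t) (th1 t) (th2 t) v
              - Ham I1 I2 l0 (l1 t) (l2 t) (th1 t) (th2 t) (u t) = ?s * (v - u t)"
        using hamiltonian_difference by (simp add: switching_def)
      then have "0 \<le> ?s * (v - u t)" using elim(3) that by fastforce
      then show ?thesis by (simp add: right_diff_distrib)
    qed
    moreover have "\<bar>u t\<bar> \<le> M" "?s \<noteq> 0" using elim(1,2) control_bound by auto
    ultimately show ?case by (intro linear_minimizer_bang_bang) auto
  qed
qed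

end

theorem mainTheorem4:
  fixes I1 I2 M T l0 :: real and m1 m2 :: nat
    and th1 th2 u l1 l2 :: "real \<Rightarrow> real"
  assumes "I1 > 0" and "I2 > 0" and "I1 \<noteq> I2" and "M > 0"
    and "m1 > 0" and "m2 > 0"
    and "pmp_extremal I1 I2 M m1 m2 T th1 th2 u l0 l1 l2"
  shows "\<not> (\<exists>a b. 0 \<le> a \<and> a < b \<and> b \<le> T \<and> (\<forall>t\<in>{a..b}. switching l1 l2 th1 th2 t = 0))
    \<and> (AE t in lebesgue_on {0..T}.
          (switching l1 l2 th1 th2 t < 0 \<longrightarrow> u t = M) \<and>
          (switching l1 l2 th1 th2 t > 0 \<longrightarrow> u t = - M) \<and>
          u t \<in> {- M, M})"
proof -
  interpret extremal_arc I1 I2 M m1 m2 T th1 th2 u l0 l1 l2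
    using assms(3,7) by unfold_locales
  have "\<not> {a..b} \<subseteq> {t\<in>{0..T}. switching l1 l2 th1 th2 t = 0}" if "a < b" for a b
    using switching_zero_set_countable uncountable_closed_interval[of a b] that countable_subset
    by blast
  then show ?thesis using bang_bang by fastforce
qed

end
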